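(* Let $\alpha,\beta$ be nonzero real numbers and $r,x$ real numbers. For every nonnegative integer $m$, the following identity of formal power series in $t$ holds: $$\sum_{n=0}^{\infty}S_{n+m}(x;\alpha,\beta,r)\frac{t^{n}}{n!}=(1+\alpha t)^{\frac{r-m\alpha}{\alpha}}\exp\left(\frac{x}{\beta}\left[(1+\alpha t)^{\frac{\beta}{\alpha}}-1\right]\right)S_{m}\left(x(1+\alpha t)^{\frac{\beta}{\alpha}};\alpha,\beta,r\right).$$
   Context: For a number $t$ and $\alpha$, the generalised factorial is $(t|\alpha)_n=\prod_{j=0}^{n-1}(t-j\alpha)$ for $n\ge 1$ and $(t|\alpha)_0=1$. For parameters $\alpha,\beta,\gamma$, the generalised Stirling numbers $S(n,k,\alpha,\beta,\gamma)$ ($0\le k\le n$) are defined by the polynomial identity $(t|\alpha)_n=\sum_{k=0}^{n}S(n,k,\alpha,\beta,\gamma)\,(t-\gamma|\beta)_k$ in the variable $t$. The generalised exponential polynomials are $S_n(y;\alpha,\beta,r)=\sum_{k=0}^{n}S(n,k,\alpha,\beta,r)\,y^k$. Here $(1+\alpha t)^{c}$ denotes the formal power series $\sum_{j\ge0}\binom{c}{j}\alpha^j t^j$, and $S_m(x(1+\alpha t)^{\beta/\alpha};\alpha,\beta,r)$ means the polynomial $S_m(\cdot;\alpha,\beta,r)$ evaluated at the power series $x(1+\alpha t)^{\beta/\alpha}$. *)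

theory Defs
  imports "HOL-Analysis.Analysis" "HOL-Computational_Algebra.Formal_Power_Series"
begin

definition gfact :: "real \<Rightarrow> real \<Rightarrow> nat \<Rightarrow> real" where
  "gfact t a n = (\<Prod>j<n. t - real j * a)"

definition gstirling :: "nat \<Rightarrow> nat \<Rightarrow> real \<Rightarrow> real \<Rightarrow> real \<Rightarrow> real" where
  "gstirling n k a b g =
     (THE c :: nat \<Rightarrow> real. (\<forall>t. gfact t a n = (\<Sum>i\<le>n. c i * gfact (t - g) b i))
                           \<and> (\<forall>i>n. c i = 0)) k"

definition gexppoly_fps :: "nat \<Rightarrow> real fps \<Rightarrow> real \<Rightarrow> real \<Rightarrow> real \<Rightarrow> real fps" where
  "gexppoly_fps n y a b r = (\<Sum>k\<le>n. fps_const (gstirling n k a b r) * y ^ k)"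

definition gexppoly :: "nat \<Rightarrow> real \<Rightarrow> real \<Rightarrow> real \<Rightarrow> real \<Rightarrow> real" where
  "gexppoly n y a b r = (\<Sum>k\<le>n. gstirling n k a b r * y ^ k)"

text \<open>(1 + a t)^c as the formal power series sum_j (c choose j) a^j t^j.\<close>
definition binom_fps :: "real \<Rightarrow> real \<Rightarrow> real fps" where
  "binom_fps a c = Abs_fps (\<lambda>j. (c gchoose j) * a ^ j)"

text \<open>exp of a formal power series with zero constant term, by composition.\<close>
definition exp_fps :: "real fps \<Rightarrow> real fps" where
  "exp_fps u = fps_exp 1 oo u"

end

theory Submission
  imports Defs
begin

(* Write R m for the right-hand side (shifted_gexppoly_egf below). The Stirling numbers obey
   the triangular recurrence S(n+1,k) = S(n,k-1) + (k b - n a + r) S(n,k), and the derivative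
   of (1 + a t)^c is c a (1 + a t)^(c-1); with these, differentiating R m term by term gives
   exactly R (m+1). So the n-th coefficient of R m is the constant term of R (n+m) divided
   by n!, and the constant term of R m is S_m(x). *)

no_notation vec_nth (infixl "$" 90)
notation fps_nth (infixl "$" 75)

lemma binom_fps_nth_0 [simp]: "binom_fps a c $ 0 = 1"
  by (simp add: binom_fps_def)

lemma binom_fps_0 [simp]: "binom_fps a 0 = 1"
proof (rule fps_ext)
  show "binom_fps a 0 $ n = 1 $ n" for n
    by (cases n) (simp_all add: binom_fps_def)
qed

lemma binom_fps_mult: "binom_fps a c * binom_fps a d = binom_fps a (c + d)"
proof (rule fps_ext)
  fix n
  have "(binom_fps a c * binom_fps a d) $ n = (\<Sum>i=0..n. (c gchoose i) * (d gchoose (n - i)) * a ^ n)"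
    unfolding fps_mult_nth binom_fps_def
    by (rule sum.cong) (auto simp: power_add[symmetric])
  also have "\<dots> = ((c + d) gchoose n) * a ^ n"
    by (simp add: sum_distrib_right[symmetric] gbinomial_Vandermonde)
  finally show "(binom_fps a c * binom_fps a d) $ n = binom_fps a (c + d) $ n"
    by (simp add: binom_fps_def)
qed

lemma binom_fps_power: "binom_fps a c ^ k = binom_fps a (real k * c)"
  by (induction k) (simp_all add: binom_fps_mult algebra_simps)

lemma fps_deriv_binom_fps: "fps_deriv (binom_fps a c) = fps_const (c * a) * binom_fps a (c - 1)"
proof (rule fps_ext)
  fix n
  have "of_nat (Suc n) * (c gchoose Suc n) = c * ((c - 1) gchoose n)"
    by (rule gbinomial_absorption)
  then show "fps_deriv (binom_fps a c) $ n = (fps_const (c * a) * binom_fps a (c - 1)) $ n"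
    by (simp add: binom_fps_def)
qed

lemma binom_fps_mult_deriv_power:
  "binom_fps a c * fps_deriv ((fps_const x * binom_fps a p) ^ k)
     = fps_const (real k * p * a) * binom_fps a (c - 1) * (fps_const x * binom_fps a p) ^ k"
proof -
  have "binom_fps a c * fps_deriv ((fps_const x * binom_fps a p) ^ k)
      = fps_const (x ^ k * (real k * p * a)) * (binom_fps a c * binom_fps a (real k * p - 1))"
    by (simp add: power_mult_distrib binom_fps_power fps_const_power fps_deriv_binom_fps mult_ac)
  also have "binom_fps a c * binom_fps a (real k * p - 1) = binom_fps a (c - 1) * binom_fps a p ^ k"
    by (simp add: binom_fps_power binom_fps_mult algebra_simps)
  finally show ?thesis
    by (simp add: power_mult_distrib fps_const_power mult_ac)
qed

lemma fps_nth_deriv_chain: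
  fixes f :: "nat \<Rightarrow> 'a::field_char_0 fps"
  assumes "\<And>m. fps_deriv (f m) = f (Suc m)"
  shows "f m $ n = f (n + m) $ 0 / fact n"
proof -
  have "fps_nth_deriv n (f m) = f (n + m)"
    by (induction n arbitrary: m) (simp_all add: assms)
  then show ?thesis
    using fps_deriv_maclauren_0[of n "f m"] by (simp add: field_simps)
qed

lemma exp_fps_nth_0 [simp]: "exp_fps u $ 0 = 1"
  by (simp add: exp_fps_def)

lemma fps_deriv_exp_fps: "u $ 0 = 0 \<Longrightarrow> fps_deriv (exp_fps u) = exp_fps u * fps_deriv u"
  by (simp add: exp_fps_def fps_compose_deriv fps_compose_mult_distrib)

lemma gfact_Suc: "gfact t a (Suc n) = gfact t a n * (t - real n * a)"
  by (simp add: gfact_def)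

lemma gfact_multiple_eq_0: "j < i \<Longrightarrow> gfact (real j * b) b i = 0"
  unfolding gfact_def by (rule prod_zero) (auto intro!: bexI[of _ j])

lemma gfact_multiple_self_nonzero: "b \<noteq> 0 \<Longrightarrow> gfact (real j * b) b j \<noteq> 0"
  by (simp add: gfact_def left_diff_distrib[symmetric])

fun gstirling_rec :: "real \<Rightarrow> real \<Rightarrow> real \<Rightarrow> nat \<Rightarrow> nat \<Rightarrow> real" where
  "gstirling_rec a b g 0 k = (if k = 0 then 1 else 0)"
| "gstirling_rec a b g (Suc n) k =
     (if k = 0 then 0 else gstirling_rec a b g n (k - 1))
     + (real k * b - real n * a + g) * gstirling_rec a b g n k"

lemma gstirling_rec_eq_0: "n < k \<Longrightarrow> gstirling_rec a b g n k = 0"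
  by (induction n arbitrary: k) auto

lemma gfact_eq_sum_gstirling_rec:
  "gfact t a n = (\<Sum>i\<le>n. gstirling_rec a b g n i * gfact (t - g) b i)"
proof (induction n)
  case 0
  then show ?case by (simp add: gfact_def)
next
  case (Suc n)
  let ?S = "gstirling_rec a b g n" and ?G = "gfact (t - g) b"
  have "gfact t a (Suc n) = (\<Sum>i\<le>n. ?S i * ?G i * (t - real n * a))"
    by (simp add: gfact_Suc Suc sum_distrib_right)
  also have "\<dots> = (\<Sum>i\<le>n. ?S i * ?G (Suc i)) + (\<Sum>i\<le>n. (real i * b - real n * a + g) * ?S i * ?G i)"
    by (simp add: sum.distrib[symmetric] gfact_Suc algebra_simps)
  also have "(\<Sum>i\<le>n. ?S i * ?G (Suc i)) = (\<Sum>i\<le>Suc n. (if i = 0 then 0 else ?S (i - 1)) * ?G i)"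
    by (subst sum.atMost_Suc_shift) simp
  also have "(\<Sum>i\<le>n. (real i * b - real n * a + g) * ?S i * ?G i)
      = (\<Sum>i\<le>Suc n. (real i * b - real n * a + g) * ?S i * ?G i)"
    by (simp add: gstirling_rec_eq_0)
  finally show ?case
    by (simp add: sum.distrib[symmetric] algebra_simps)
qed

text \<open>Evaluating at \<open>t = g + j * b\<close> kills every basis polynomial of index above \<open>j\<close>,
  so the coefficients vanish one after another.\<close>
lemma sum_gfact_eq_0_imp_coeff_eq_0:
  assumes "b \<noteq> 0" and "\<forall>t. (\<Sum>i\<le>n. e i * gfact (t - g) b i) = 0" and "j \<le> n"
  shows "e j = 0"
  using \<open>j \<le> n\<close>
proof (induction j rule: less_induct)
  case (less j)
  have "0 = (\<Sum>i\<le>n. e i * gfact (real j * b) b i)"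
    using assms(2)[rule_format, of "g + real j * b"] by simp
  also have "\<dots> = e j * gfact (real j * b) b j + (\<Sum>i\<in>{..n} - {j}. e i * gfact (real j * b) b i)"
    using less.prems by (subst sum.remove[of _ j]) auto
  also have "(\<Sum>i\<in>{..n} - {j}. e i * gfact (real j * b) b i) = 0"
  proof (intro sum.neutral ballI)
    fix i assume "i \<in> {..n} - {j}"
    then consider "i < j" | "j < i" by fastforce
    then show "e i * gfact (real j * b) b i = 0"
      by cases (use less in \<open>simp_all add: gfact_multiple_eq_0\<close>)
  qed
  finally show ?case
    using gfact_multiple_self_nonzero[OF assms(1)] by simp
qed

lemma gstirling_eq_gstirling_rec:
  assumes "b \<noteq> 0"
  shows "gstirling n k a b g = gstirling_rec a b g n k"
proof -
  have "(THE c. (\<forall>t. gfact t a n = (\<Sum>i\<le>n. c i * gfact (t - g) b i)) \<and> (\<forall>i>n. c i = 0))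
      = gstirling_rec a b g n"
  proof (rule the_equality)
    show "(\<forall>t. gfact t a n = (\<Sum>i\<le>n. gstirling_rec a b g n i * gfact (t - g) b i))
        \<and> (\<forall>i>n. gstirling_rec a b g n i = 0)"
      using gfact_eq_sum_gstirling_rec gstirling_rec_eq_0 by blast
  next
    fix c :: "nat \<Rightarrow> real"
    assume c: "(\<forall>t. gfact t a n = (\<Sum>i\<le>n. c i * gfact (t - g) b i)) \<and> (\<forall>i>n. c i = 0)"
    have "\<forall>t. (\<Sum>i\<le>n. (c i - gstirling_rec a b g n i) * gfact (t - g) b i) = 0"
      using c gfact_eq_sum_gstirling_rec[of _ a n b g] by (simp add: algebra_simps sum_subtractf)
    then have "c i = gstirling_rec a b g n i" if "i \<le> n" for i
      using sum_gfact_eq_0_imp_coeff_eq_0[where e = "\<lambda>i. c i - gstirling_rec a b g n i" and j = i] assms that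
      by simp
    moreover have "c i = gstirling_rec a b g n i" if "n < i" for i
      using c that by (simp add: gstirling_rec_eq_0)
    ultimately show "c = gstirling_rec a b g n"
      by (meson ext not_le)
  qed
  then show ?thesis
    unfolding gstirling_def by simp
qed

lemma gexppoly_fps_nth_0: "gexppoly_fps n Y a b g $ 0 = gexppoly n (Y $ 0) a b g"
  by (simp add: gexppoly_fps_def gexppoly_def fps_sum_nth fps_nth_power_0)

lemma gexppoly_fps_Suc:
  assumes "b \<noteq> 0"
  shows "gexppoly_fps (Suc n) Y a b g
    = (Y + fps_const (g - real n * a)) * gexppoly_fps n Y a b g
      + (\<Sum>k\<le>n. fps_const (real k * b * gstirling n k a b g) * Y ^ k)"
proof -
  let ?S = "gstirling_rec a b g n"
  have "fps_const (gstirling_rec a b g (Suc n) k) * Y ^ k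
      = fps_const (if k = 0 then 0 else ?S (k - 1)) * Y ^ k
        + fps_const ((real k * b - real n * a + g) * ?S k) * Y ^ k" for k
    by (simp only: gstirling_rec.simps fps_const_add[symmetric] distrib_right)
  then have "gexppoly_fps (Suc n) Y a b g
      = (\<Sum>k\<le>Suc n. fps_const (if k = 0 then 0 else ?S (k - 1)) * Y ^ k)
        + (\<Sum>k\<le>Suc n. fps_const ((real k * b - real n * a + g) * ?S k) * Y ^ k)"
    by (simp only: gexppoly_fps_def gstirling_eq_gstirling_rec[OF assms] sum.distrib)
  also have "(\<Sum>k\<le>Suc n. fps_const (if k = 0 then 0 else ?S (k - 1)) * Y ^ k)
      = Y * (\<Sum>k\<le>n. fps_const (?S k) * Y ^ k)"
    by (subst sum.atMost_Suc_shift) (simp add: sum_distrib_left algebra_simps)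
  also have "(\<Sum>k\<le>Suc n. fps_const ((real k * b - real n * a + g) * ?S k) * Y ^ k)
      = (\<Sum>k\<le>n. fps_const ((real k * b - real n * a + g) * ?S k) * Y ^ k)"
    by (simp add: gstirling_rec_eq_0)
  also have "\<dots> = fps_const (g - real n * a) * (\<Sum>k\<le>n. fps_const (?S k) * Y ^ k)
        + (\<Sum>k\<le>n. fps_const (real k * b * ?S k) * Y ^ k)"
  proof -
    have "fps_const ((real k * b - real n * a + g) * ?S k) * Y ^ k
        = fps_const (g - real n * a) * (fps_const (?S k) * Y ^ k) + fps_const (real k * b * ?S k) * Y ^ k"
      for k
    proof -
      have split: "(real k * b - real n * a + g) * ?S k = (g - real n * a) * ?S k + real k * b * ?S k"
        by (simp add: algebra_simps)
      show ?thesis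
        unfolding split by (simp only: fps_const_add[symmetric] distrib_right mult.assoc[symmetric] fps_const_mult)
    qed
    then show ?thesis
      by (simp add: sum.distrib sum_distrib_left)
  qed
  finally show ?thesis
    by (simp add: gexppoly_fps_def gstirling_eq_gstirling_rec[OF assms] algebra_simps)
qed

definition shifted_gexppoly_egf :: "real \<Rightarrow> real \<Rightarrow> real \<Rightarrow> real \<Rightarrow> nat \<Rightarrow> real fps" where
  "shifted_gexppoly_egf a b r x m =
     binom_fps a ((r - real m * a) / a)
     * exp_fps (fps_const (x / b) * (binom_fps a (b / a) - 1))
     * gexppoly_fps m (fps_const x * binom_fps a (b / a)) a b r"

lemma shifted_gexppoly_egf_nth_0: "shifted_gexppoly_egf a b r x m $ 0 = gexppoly m x a b r"
  by (simp add: shifted_gexppoly_egf_def gexppoly_fps_nth_0)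

lemma fps_deriv_shifted_gexppoly_egf:
  assumes "a \<noteq> 0" and "b \<noteq> 0"
  shows "fps_deriv (shifted_gexppoly_egf a b r x m) = shifted_gexppoly_egf a b r x (Suc m)"
proof -
  define c where "c = (r - real m * a) / a"
  define Y where "Y = fps_const x * binom_fps a (b / a)"
  define E where "E = exp_fps (fps_const (x / b) * (binom_fps a (b / a) - 1))"
  let ?B = "binom_fps a" and ?P = "gexppoly_fps m Y a b r"
  have B_deriv: "fps_deriv (?B c) = fps_const (r - real m * a) * ?B (c - 1)"
    using assms by (simp add: fps_deriv_binom_fps c_def)
  have Y_deriv: "?B c * fps_deriv (Y ^ k) = fps_const (real k * b) * ?B (c - 1) * Y ^ k" for k
    using binom_fps_mult_deriv_power[of a c x "b / a" k] assms by (simp add: Y_def)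
  have E_deriv: "?B c * fps_deriv E = ?B (c - 1) * E * Y"
  proof -
    have "fps_const (x / b) * (?B (b / a) - 1) = fps_const (1 / b) * (Y - fps_const x)"
      by (simp add: Y_def algebra_simps)
    then have "fps_deriv E = E * (fps_const (1 / b) * fps_deriv Y)"
      unfolding E_def by (subst fps_deriv_exp_fps) (simp_all add: Y_def)
    then have "?B c * fps_deriv E = E * fps_const (1 / b) * (?B c * fps_deriv (Y ^ 1))"
      by (simp add: mult_ac)
    also have "\<dots> = ?B (c - 1) * E * Y"
      using assms(2) by (simp only: Y_deriv) (simp add: mult_ac flip: fps_const_mult)
    finally show ?thesis .
  qed
  have P_deriv: "?B c * fps_deriv ?P
      = ?B (c - 1) * (\<Sum>k\<le>m. fps_const (real k * b * gstirling m k a b r) * Y ^ k)"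
    unfolding gexppoly_fps_def fps_deriv_sum sum_distrib_left
  proof (rule sum.cong)
    fix k
    have "?B c * fps_deriv (fps_const (gstirling m k a b r) * Y ^ k)
        = fps_const (gstirling m k a b r) * (?B c * fps_deriv (Y ^ k))"
      by (simp add: mult_ac)
    then show "?B c * fps_deriv (fps_const (gstirling m k a b r) * Y ^ k)
        = ?B (c - 1) * (fps_const (real k * b * gstirling m k a b r) * Y ^ k)"
      by (simp only: Y_deriv) (simp add: mult_ac)
  qed simp
  have "fps_deriv (shifted_gexppoly_egf a b r x m)
      = fps_deriv (?B c) * E * ?P + (?B c * fps_deriv E) * ?P + E * (?B c * fps_deriv ?P)"
    by (simp add: shifted_gexppoly_egf_def c_def E_def Y_def fps_deriv_mult algebra_simps)
  also have "\<dots> = ?B (c - 1) * E * ((Y + fps_const (r - real m * a)) * ?P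
      + (\<Sum>k\<le>m. fps_const (real k * b * gstirling m k a b r) * Y ^ k))"
    unfolding B_deriv E_deriv P_deriv by (simp add: algebra_simps)
  also have "\<dots> = ?B (c - 1) * E * gexppoly_fps (Suc m) Y a b r"
    by (simp only: gexppoly_fps_Suc[OF assms(2)])
  also have "\<dots> = shifted_gexppoly_egf a b r x (Suc m)"
    using assms(1) by (simp add: shifted_gexppoly_egf_def c_def E_def Y_def field_simps)
  finally show ?thesis .
qed

theorem lemma2:
  fixes \<alpha> \<beta> r x :: real and m :: nat
  assumes "\<alpha> \<noteq> 0" and "\<beta> \<noteq> 0"
  shows "Abs_fps (\<lambda>n. gexppoly (n + m) x \<alpha> \<beta> r / fact n) =
    binom_fps \<alpha> ((r - real m * \<alpha>) / \<alpha>)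
    * exp_fps (fps_const (x / \<beta>) * (binom_fps \<alpha> (\<beta> / \<alpha>) - 1))
    * gexppoly_fps m (fps_const x * binom_fps \<alpha> (\<beta> / \<alpha>)) \<alpha> \<beta> r"
proof -
  have "shifted_gexppoly_egf \<alpha> \<beta> r x m $ n = gexppoly (n + m) x \<alpha> \<beta> r / fact n" for n
    using fps_nth_deriv_chain[of "shifted_gexppoly_egf \<alpha> \<beta> r x", OF fps_deriv_shifted_gexppoly_egf[OF assms]]
    by (simp add: shifted_gexppoly_egf_nth_0)
  then show ?thesis
    unfolding shifted_gexppoly_egf_def[symmetric] by (simp add: fps_eq_iff)
qed

end
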